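(* Let $G=(V,E)$ be a connected undirected graph, where $E$ is a set of unordered pairs of distinct vertices. Consider the following two linear programs. (LR), with variables $d_{ij}$ for $i,j\in V$: $$\min_{d}\ \sum_{(i,j)\in E} d_{ij}\quad\text{s.t.}\quad \sum_{i\in V}\sum_{j\in V} d_{ij}\ge 1,\qquad d_{ij}\le d_{ik}+d_{kj}\ \ \forall\, i,j,k\in V\text{ distinct},$$ $$d_{ij}=d_{ji}\ge 0\ \ \forall i,j\in V,\qquad d_{ii}=0\ \ \forall i\in V.$$ (LR\_OL), with variables $b_{ij}$ for $i,j\in V$: $$\min_{b}\ \sum_{(i,j)\in E} b_{ij}\quad\text{s.t.}\quad \sum_{i\in V}\sum_{j\in V} b_{ij}\ge 1,\qquad b_{ij}\le b_{ik}+b_{kj}\ \ \forall\, i,j,k\in V\text{ distinct with }(i,k)\in E,$$ $$b_{ij}=b_{ji}\ge 0\ \ \forall i,j\in V,\qquad b_{ii}=0\ \ \forall i\in V.$$ Let $d^*$ be an optimal solution of (LR) with optimal value $z_{d^*}=\sum_{(i,j)\in E} d^*_{ij}$, and let $b^*$ be an optimal solution of (LR\_OL) with optimal value $z_{b^*}=\sum_{(i,j)\in E} b^*_{ij}$. Then $z_{b^*}=z_{d^*}$. Moreover, from any optimal solution $b^*$ of (LR\_OL) one can construct a feasible solution $d'$ of (LR) (namely $d'_{ij}$ = the shortest-path distance from $i$ to $j$ in $G$ with edge weights $w_{uv}=b^*_{uv}$ for $(u,v)\in E$) such that $d'_{ij}\ge b^*_{ij}$ for all $i,j\in V$ and $d'_{ij}=b^*_{ij}$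 for all $(i,j)\in E$; in particular $d'$ is optimal for (LR).
   Context: In the sums over $(i,j)\in E$, each edge of $E$ is counted via the corresponding variable $d_{ij}$ (resp. $b_{ij}$), these variables being symmetric. A path from $i$ to $j$ in $G$ is a sequence of vertices $i=v_0,\dots,v_m=j$ with $(v_r,v_{r+1})\in E$; its weight is the sum of the edge weights along it. *)

theory Defs
  imports Main "HOL-Library.Multiset" Complex_Main
begin

text \<open>Graph representation: a finite vertex set V and an edge set E of ordered
pairs, in which every undirected edge {i,j} is listed exactly once (either as
(i,j) or as (j,i)). Thus a sum over (i,j) in E counts every edge once, through
the (symmetric) variable d i j.\<close>

definition adj :: "('a \<times> 'a) set \<Rightarrow> 'a \<Rightarrow> 'a \<Rightarrow> bool" where
  "adj E u v \<longleftrightarrow> (u, v) \<in> E \<or> (v, u) \<in> E"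

definition simple_graph :: "'a set \<Rightarrow> ('a \<times> 'a) set \<Rightarrow> bool" where
  "simple_graph V E \<longleftrightarrow> finite V \<and> E \<subseteq> V \<times> V
     \<and> (\<forall>(i, j) \<in> E. i \<noteq> j \<and> (j, i) \<notin> E)"

definition is_walk :: "('a \<times> 'a) set \<Rightarrow> 'a \<Rightarrow> 'a \<Rightarrow> 'a list \<Rightarrow> bool" where
  "is_walk E i j ps \<longleftrightarrow> ps \<noteq> [] \<and> hd ps = i \<and> last ps = j
     \<and> (\<forall>r < length ps - 1. adj E (ps ! r) (ps ! Suc r))"

definition walk_weight :: "('a \<Rightarrow> 'a \<Rightarrow> real) \<Rightarrow> 'a list \<Rightarrow> real" where
  "walk_weight w ps = (\<Sum>r < length ps - 1. w (ps ! r) (ps ! Suc r))"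

definition connected_graph :: "'a set \<Rightarrow> ('a \<times> 'a) set \<Rightarrow> bool" where
  "connected_graph V E \<longleftrightarrow> (\<forall>i \<in> V. \<forall>j \<in> V. \<exists>ps. is_walk E i j ps)"

definition sp_dist :: "('a \<times> 'a) set \<Rightarrow> ('a \<Rightarrow> 'a \<Rightarrow> real) \<Rightarrow> 'a \<Rightarrow> 'a \<Rightarrow> real" where
  "sp_dist E w i j = Inf {walk_weight w ps | ps. is_walk E i j ps}"

definition edge_obj :: "('a \<times> 'a) set \<Rightarrow> ('a \<Rightarrow> 'a \<Rightarrow> real) \<Rightarrow> real" where
  "edge_obj E d = (\<Sum>(i, j) \<in> E. d i j)"

definition LR_feasible :: "'a set \<Rightarrow> ('a \<times> 'a) set \<Rightarrow> ('a \<Rightarrow> 'a \<Rightarrow> real) \<Rightarrow> bool" where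
  "LR_feasible V E d \<longleftrightarrow>
     (\<Sum>i \<in> V. \<Sum>j \<in> V. d i j) \<ge> 1
   \<and> (\<forall>i \<in> V. \<forall>j \<in> V. \<forall>k \<in> V. i \<noteq> j \<and> i \<noteq> k \<and> j \<noteq> k \<longrightarrow> d i j \<le> d i k + d k j)
   \<and> (\<forall>i \<in> V. \<forall>j \<in> V. d i j = d j i \<and> d i j \<ge> 0)
   \<and> (\<forall>i \<in> V. d i i = 0)"

definition LR_OL_feasible :: "'a set \<Rightarrow> ('a \<times> 'a) set \<Rightarrow> ('a \<Rightarrow> 'a \<Rightarrow> real) \<Rightarrow> bool" where
  "LR_OL_feasible V E b \<longleftrightarrow>
     (\<Sum>i \<in> V. \<Sum>j \<in> V. b i j) \<ge> 1
   \<and> (\<forall>i \<in> V. \<forall>j \<in> V. \<forall>k \<in> V. i \<noteq> j \<and> i \<noteq> k \<and> j \<noteq> k \<and> adj E i k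
        \<longrightarrow> b i j \<le> b i k + b k j)
   \<and> (\<forall>i \<in> V. \<forall>j \<in> V. b i j = b j i \<and> b i j \<ge> 0)
   \<and> (\<forall>i \<in> V. b i i = 0)"

definition LR_optimal :: "'a set \<Rightarrow> ('a \<times> 'a) set \<Rightarrow> ('a \<Rightarrow> 'a \<Rightarrow> real) \<Rightarrow> bool" where
  "LR_optimal V E d \<longleftrightarrow> LR_feasible V E d
     \<and> (\<forall>d'. LR_feasible V E d' \<longrightarrow> edge_obj E d \<le> edge_obj E d')"

definition LR_OL_optimal :: "'a set \<Rightarrow> ('a \<times> 'a) set \<Rightarrow> ('a \<Rightarrow> 'a \<Rightarrow> real) \<Rightarrow> bool" where
  "LR_OL_optimal V E b \<longleftrightarrow> LR_OL_feasible V E b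
     \<and> (\<forall>b'. LR_OL_feasible V E b' \<longrightarrow> edge_obj E b \<le> edge_obj E b')"

end

theory Submission
  imports Defs
begin

text \<open>Every feasible d of (LR) is feasible for (LR_OL), so the optimum of (LR_OL) is a
lower bound for (LR). Conversely, the triangle inequalities of (LR_OL) with (i,k) an
edge say that b i j is at most b i k + b k j for a first step i-k of a walk; by induction
b i j is bounded by the b-weight of every walk from i to j, hence by the shortest-path
distance d' of the b-weighted graph. So d' is a pseudometric dominating b (thus feasible
for (LR)) that agrees with b on edges (thus has the same objective value).\<close>

lemma adj_sym: "adj E u v \<Longrightarrow> adj E v u"
  unfolding adj_def by auto

lemma is_walk_singleton: "is_walk E i j [x] \<longleftrightarrow> x = i \<and> x = j"
  unfolding is_walk_def by auto

lemma is_walk_Cons_Cons: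
  "is_walk E i j (x # y # ps) \<longleftrightarrow> x = i \<and> adj E x y \<and> is_walk E y j (y # ps)"
proof -
  have "(\<forall>r < Suc (length ps). adj E ((x # y # ps) ! r) ((x # y # ps) ! Suc r)) \<longleftrightarrow>
        adj E x y \<and> (\<forall>r < length ps. adj E ((y # ps) ! r) ((y # ps) ! Suc r))"
    by (simp add: All_less_Suc2 del: All_less_Suc)
  then show ?thesis
    unfolding is_walk_def by auto
qed

lemma walk_weight_singleton: "walk_weight w [x] = 0"
  unfolding walk_weight_def by simp

lemma walk_weight_Cons_Cons: "walk_weight w (x # y # ps) = w x y + walk_weight w (y # ps)"
  unfolding walk_weight_def by (simp add: sum.lessThan_Suc_shift del: sum.lessThan_Suc)

lemma walk_weight_nonneg:
  assumes "\<forall>u \<in> set ps. \<forall>v \<in> set ps. w u v \<ge> 0"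
  shows "walk_weight w ps \<ge> 0"
  unfolding walk_weight_def using assms by (intro sum_nonneg) auto

lemma is_walk_edge: "adj E i j \<Longrightarrow> is_walk E i j [i, j]"
  by (simp add: is_walk_Cons_Cons is_walk_singleton)

lemma set_walk_subset:
  assumes "E \<subseteq> V \<times> V" "is_walk E i j ps" "i \<in> V"
  shows "set ps \<subseteq> V"
  using assms(2,3)
proof (induction ps arbitrary: i rule: induct_list012)
  case (3 x y ps)
  then have "adj E x y" "is_walk E y j (y # ps)" "x \<in> V"
    by (auto simp: is_walk_Cons_Cons)
  moreover from \<open>adj E x y\<close> have "y \<in> V"
    using assms(1) unfolding adj_def by auto
  ultimately show ?case
    using "3.IH"(2) by auto
qed (auto simp: is_walk_def)

lemma is_walk_append:
  assumes "is_walk E i k ps" "is_walk E k j qs"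
  shows "is_walk E i j (ps @ tl qs)"
  using assms(1)
proof (induction ps arbitrary: i rule: induct_list012)
  case (2 x)
  moreover from assms(2) have "qs = k # tl qs"
    unfolding is_walk_def by (cases qs) auto
  ultimately show ?case
    using assms(2) by (metis append_Cons append_Nil is_walk_singleton)
next
  case (3 x y ps)
  then show ?case
    by (auto simp: is_walk_Cons_Cons)
qed (simp add: is_walk_def)

lemma walk_weight_append:
  assumes "ps \<noteq> []" "qs \<noteq> []" "last ps = hd qs"
  shows "walk_weight w (ps @ tl qs) = walk_weight w ps + walk_weight w qs"
  using assms
proof (induction ps rule: induct_list012)
  case (2 x)
  then have "qs = x # tl qs"
    by (cases qs) auto
  then show ?case
    by (metis append_Cons append_Nil add_0 walk_weight_singleton)
next
  case (3 x y ps)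
  then show ?case
    by (simp add: walk_weight_Cons_Cons)
qed simp

lemma walk_weight_append_walks:
  "is_walk E i k ps \<Longrightarrow> is_walk E k j qs \<Longrightarrow>
    walk_weight w (ps @ tl qs) = walk_weight w ps + walk_weight w qs"
  unfolding is_walk_def by (intro walk_weight_append) auto

lemma is_walk_rev: "is_walk E i j ps \<Longrightarrow> is_walk E j i (rev ps)"
proof (induction ps arbitrary: i rule: induct_list012)
  case (3 x y ps)
  then have "is_walk E j y (rev (y # ps))" "is_walk E y i [y, x]"
    by (auto simp: is_walk_Cons_Cons is_walk_singleton adj_sym)
  from is_walk_append[OF this] show ?case
    by simp
qed (simp_all add: is_walk_def)

lemma walk_weight_rev:
  assumes "\<forall>u \<in> set ps. \<forall>v \<in> set ps. w u v = w v u"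
  shows "walk_weight w (rev ps) = walk_weight w ps"
  using assms
proof (induction ps rule: induct_list012)
  case (3 x y ps)
  have sym_tail: "\<forall>u \<in> set (y # ps). \<forall>v \<in> set (y # ps). w u v = w v u"
    using "3.prems" by (meson list.set_intros(2))
  have "w y x = w x y"
    using "3.prems" by (meson list.set_intros)
  have "walk_weight w (rev (x # y # ps)) = walk_weight w (rev (y # ps) @ tl [y, x])"
    by simp
  also have "\<dots> = walk_weight w (rev (y # ps)) + walk_weight w [y, x]"
    by (rule walk_weight_append) simp_all
  also have "\<dots> = walk_weight w (y # ps) + w x y"
    using "3.IH"(2)[OF sym_tail] \<open>w y x = w x y\<close>
    by (simp add: walk_weight_Cons_Cons walk_weight_singleton)
  also have "\<dots> = walk_weight w (x # y # ps)"
    by (simp add: walk_weight_Cons_Cons)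
  finally show ?case .
qed simp_all

context
  fixes V :: "'a set" and E :: "('a \<times> 'a) set" and w :: "'a \<Rightarrow> 'a \<Rightarrow> real"
  assumes edges: "E \<subseteq> V \<times> V"
    and connected: "connected_graph V E"
    and nonneg: "\<forall>u \<in> V. \<forall>v \<in> V. w u v \<ge> 0"
begin

lemma walk_weight_nonneg_in_graph: "is_walk E i j ps \<Longrightarrow> i \<in> V \<Longrightarrow> walk_weight w ps \<ge> 0"
  using set_walk_subset[OF edges] nonneg by (intro walk_weight_nonneg) blast

lemma sp_dist_greatest:
  assumes "i \<in> V" "j \<in> V" "\<And>ps. is_walk E i j ps \<Longrightarrow> c \<le> walk_weight w ps"
  shows "c \<le> sp_dist E w i j"
  unfolding sp_dist_def using assms connected
  by (intro cInf_greatest) (auto simp: connected_graph_def)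

lemma sp_dist_le_walk_weight:
  assumes "i \<in> V" "is_walk E i j ps"
  shows "sp_dist E w i j \<le> walk_weight w ps"
proof -
  have "bdd_below {walk_weight w ps | ps. is_walk E i j ps}"
    using walk_weight_nonneg_in_graph \<open>i \<in> V\<close> by (intro bdd_belowI[of _ 0]) blast
  then show ?thesis
    unfolding sp_dist_def using assms(2) by (intro cInf_lower) auto
qed

lemma sp_dist_nonneg: "i \<in> V \<Longrightarrow> j \<in> V \<Longrightarrow> sp_dist E w i j \<ge> 0"
  using walk_weight_nonneg_in_graph by (intro sp_dist_greatest) auto

lemma sp_dist_self: "i \<in> V \<Longrightarrow> sp_dist E w i i = 0"
  using sp_dist_le_walk_weight[of i i "[i]"] sp_dist_nonneg[of i i]
  by (simp add: is_walk_singleton walk_weight_singleton)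

lemma sp_dist_le_edge: "(i, j) \<in> E \<Longrightarrow> sp_dist E w i j \<le> w i j"
  using edges sp_dist_le_walk_weight[of i j "[i, j]"]
  by (auto simp: is_walk_edge adj_def walk_weight_Cons_Cons walk_weight_singleton)

lemma sp_dist_triangle:
  assumes "i \<in> V" "j \<in> V" "k \<in> V"
  shows "sp_dist E w i j \<le> sp_dist E w i k + sp_dist E w k j"
proof -
  have "sp_dist E w i j - walk_weight w qs \<le> sp_dist E w i k" if qs: "is_walk E k j qs" for qs
  proof (rule sp_dist_greatest[OF assms(1,3)])
    fix ps
    assume ps: "is_walk E i k ps"
    show "sp_dist E w i j - walk_weight w qs \<le> walk_weight w ps"
      using sp_dist_le_walk_weight[OF assms(1) is_walk_append[OF ps qs]]
        walk_weight_append_walks[OF ps qs, of w] by simp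
  qed
  then have "sp_dist E w i j - sp_dist E w i k \<le> sp_dist E w k j"
    using assms by (intro sp_dist_greatest) (auto simp: algebra_simps)
  then show ?thesis
    by simp
qed

lemma sp_dist_sym:
  assumes sym: "\<forall>u \<in> V. \<forall>v \<in> V. w u v = w v u" and "i \<in> V" "j \<in> V"
  shows "sp_dist E w i j = sp_dist E w j i"
proof -
  have "sp_dist E w j i \<le> sp_dist E w i j" if "i \<in> V" "j \<in> V" for i j
  proof (rule sp_dist_greatest[OF that])
    fix ps
    assume ps: "is_walk E i j ps"
    have "\<forall>u \<in> set ps. \<forall>v \<in> set ps. w u v = w v u"
      using set_walk_subset[OF edges ps \<open>i \<in> V\<close>] sym by blast
    then have "walk_weight w (rev ps) = walk_weight w ps"
      by (rule walk_weight_rev)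
    then show "sp_dist E w j i \<le> walk_weight w ps"
      using sp_dist_le_walk_weight[OF \<open>j \<in> V\<close> is_walk_rev[OF ps]] by simp
  qed
  with assms show ?thesis
    by (meson order_antisym)
qed

end

lemma LR_feasible_imp_LR_OL_feasible: "LR_feasible V E d \<Longrightarrow> LR_OL_feasible V E d"
  unfolding LR_feasible_def LR_OL_feasible_def by auto

lemma LR_OL_feasible_nonneg: "LR_OL_feasible V E b \<Longrightarrow> \<forall>u \<in> V. \<forall>v \<in> V. b u v \<ge> 0"
  unfolding LR_OL_feasible_def by auto

lemma LR_OL_feasible_le_walk_weight:
  assumes edges: "E \<subseteq> V \<times> V" and b: "LR_OL_feasible V E b"
    and "is_walk E i j ps" "i \<in> V"
  shows "b i j \<le> walk_weight b ps"
  using assms(3,4)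
proof (induction ps arbitrary: i rule: induct_list012)
  case (2 x)
  then show ?case
    using b by (auto simp: is_walk_singleton walk_weight_singleton LR_OL_feasible_def)
next
  case (3 x y ps)
  then have "x = i" "adj E i y" and walk: "is_walk E y j (y # ps)"
    by (auto simp: is_walk_Cons_Cons)
  then have "y \<in> V"
    using edges unfolding adj_def by auto
  moreover from walk have "j \<in> V"
    using set_walk_subset[OF edges walk \<open>y \<in> V\<close>] unfolding is_walk_def
    by (metis last_in_set subsetD)
  ultimately have "b i j \<le> b i y + b y j"
    \<comment> \<open>the degenerate cases are covered by the zero diagonal and nonnegativity\<close>
    using b \<open>adj E i y\<close> \<open>i \<in> V\<close> unfolding LR_OL_feasible_def
    by (cases "i = j \<or> i = y \<or> y = j") auto
  also have "\<dots> \<le> b i y + walk_weight b (y # ps)"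
    using "3.IH"(2)[OF walk \<open>y \<in> V\<close>] by simp
  finally show ?case
    using \<open>x = i\<close> by (simp add: walk_weight_Cons_Cons)
qed (simp add: is_walk_def)

context
  fixes V :: "'a set" and E :: "('a \<times> 'a) set" and b :: "'a \<Rightarrow> 'a \<Rightarrow> real"
  assumes edges: "E \<subseteq> V \<times> V"
    and connected: "connected_graph V E"
    and b: "LR_OL_feasible V E b"
begin

lemma LR_OL_feasible_le_sp_dist: "i \<in> V \<Longrightarrow> j \<in> V \<Longrightarrow> b i j \<le> sp_dist E b i j"
  using LR_OL_feasible_le_walk_weight[OF edges b]
  by (intro sp_dist_greatest[OF edges connected LR_OL_feasible_nonneg[OF b]])

lemma sp_dist_eq_on_edges:
  assumes "(i, j) \<in> E"
  shows "sp_dist E b i j = b i j"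
proof (rule order_antisym)
  show "sp_dist E b i j \<le> b i j"
    using sp_dist_le_edge[OF edges connected LR_OL_feasible_nonneg[OF b] assms] .
  show "b i j \<le> sp_dist E b i j"
    using assms edges by (intro LR_OL_feasible_le_sp_dist) auto
qed

lemma edge_obj_sp_dist: "edge_obj E (sp_dist E b) = edge_obj E b"
  unfolding edge_obj_def using sp_dist_eq_on_edges by (intro sum.cong) auto

lemma LR_feasible_sp_dist: "LR_feasible V E (sp_dist E b)"
proof -
  note sp_dist_lemmas = sp_dist_nonneg sp_dist_self sp_dist_triangle sp_dist_sym
  have "1 \<le> (\<Sum>i \<in> V. \<Sum>j \<in> V. b i j)"
    using b unfolding LR_OL_feasible_def by blast
  also have "\<dots> \<le> (\<Sum>i \<in> V. \<Sum>j \<in> V. sp_dist E b i j)"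
    using LR_OL_feasible_le_sp_dist by (intro sum_mono) auto
  moreover have "\<forall>u \<in> V. \<forall>v \<in> V. b u v = b v u"
    using b unfolding LR_OL_feasible_def by auto
  ultimately show ?thesis
    using sp_dist_lemmas[OF edges connected LR_OL_feasible_nonneg[OF b]]
    unfolding LR_feasible_def by auto
qed

end

lemma LR_optimal_sp_dist:
  assumes "E \<subseteq> V \<times> V" "connected_graph V E" "LR_OL_optimal V E b"
  shows "LR_optimal V E (sp_dist E b)"
proof -
  have b: "LR_OL_feasible V E b"
    using assms(3) unfolding LR_OL_optimal_def by blast
  have "edge_obj E (sp_dist E b) \<le> edge_obj E d" if "LR_feasible V E d" for d
    using assms(3) LR_feasible_imp_LR_OL_feasible[OF that] edge_obj_sp_dist[OF assms(1,2) b]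
    unfolding LR_OL_optimal_def by simp
  then show ?thesis
    unfolding LR_optimal_def using LR_feasible_sp_dist[OF assms(1,2) b] by blast
qed

theorem mainTheorem1:
  fixes V :: "'a set" and E :: "('a \<times> 'a) set"
    and dstar bstar :: "'a \<Rightarrow> 'a \<Rightarrow> real"
  assumes "simple_graph V E"
    and "connected_graph V E"
    and "LR_optimal V E dstar"
    and "LR_OL_optimal V E bstar"
  shows "edge_obj E bstar = edge_obj E dstar
    \<and> (let d' = sp_dist E bstar in
         LR_feasible V E d'
       \<and> (\<forall>i \<in> V. \<forall>j \<in> V. d' i j \<ge> bstar i j)
       \<and> (\<forall>(i, j) \<in> E. d' i j = bstar i j)
       \<and> LR_optimal V E d')"
proof -
  have edges: "E \<subseteq> V \<times> V"
    using assms(1) unfolding simple_graph_def by blast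
  have bstar: "LR_OL_feasible V E bstar"
    using assms(4) unfolding LR_OL_optimal_def by blast
  have d'_optimal: "LR_optimal V E (sp_dist E bstar)"
    using LR_optimal_sp_dist[OF edges assms(2,4)] .
  have d'_feasible: "LR_feasible V E (sp_dist E bstar)"
    using d'_optimal unfolding LR_optimal_def by blast
  have "edge_obj E dstar \<le> edge_obj E (sp_dist E bstar)"
    using assms(3) d'_feasible unfolding LR_optimal_def by blast
  moreover have "edge_obj E (sp_dist E bstar) \<le> edge_obj E dstar"
    using d'_optimal assms(3) unfolding LR_optimal_def by blast
  ultimately have "edge_obj E bstar = edge_obj E dstar"
    using edge_obj_sp_dist[OF edges assms(2) bstar] by linarith
  moreover note d'_feasible
  moreover have "\<forall>i \<in> V. \<forall>j \<in> V. sp_dist E bstar i j \<ge> bstar i j"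
    using LR_OL_feasible_le_sp_dist[OF edges assms(2) bstar] by blast
  moreover have "\<forall>(i, j) \<in> E. sp_dist E bstar i j = bstar i j"
    using sp_dist_eq_on_edges[OF edges assms(2) bstar] by blast
  ultimately show ?thesis
    using d'_optimal unfolding Let_def by (intro conjI)
qed

end
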